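(* For $n\ge0$ let $F_n(x,q;q)=\sum_{j=0}^{\lfloor n/2\rfloor}q^{j^2}\begin{bmatrix} n-j\\ j\end{bmatrix}_q x^{n-2j}$. Then for every $n\ge1$, $$\det\left(\begin{bmatrix} i+1\\ j+1\end{bmatrix}_q x^2-\begin{bmatrix} i\\ j-1\end{bmatrix}_q\right)_{i,j=0}^{n-1}=x^nF_n(x,q;q).$$
   Context: Here $q$ is an indeterminate and for integers $m\ge0$ and $j$ the $q$-binomial coefficient is $\begin{bmatrix} m\\ j\end{bmatrix}_q=\frac{(1-q^m)(1-q^{m-1})\cdots(1-q^{m-j+1})}{(1-q)(1-q^2)\cdots(1-q^j)}$ for $0\le j\le m$ and $0$ otherwise. *)

theory Defs
  imports "HOL-Computational_Algebra.Polynomial" "Jordan_Normal_Form.Determinant"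
begin

text \<open>Gaussian (q-binomial) coefficient as an integer polynomial in q, defined literally as the
  quotient of the two products (the division is exact in int poly).\<close>
definition qbinom :: "nat \<Rightarrow> int \<Rightarrow> int poly" where
  "qbinom m j = (if 0 \<le> j \<and> j \<le> int m
     then (\<Prod>i<nat j. 1 - monom 1 (m - i)) div (\<Prod>i<nat j. 1 - monom 1 (i + 1))
     else 0)"

text \<open>The bivariate polynomial ring Z[q][x]: x is the outer indeterminate, q the inner one.\<close>
definition xv :: "int poly poly" where "xv = [:0, 1:]"
definition qv :: "int poly poly" where "qv = [:[:0, 1:]:]"

definition Fn :: "nat \<Rightarrow> int poly poly" where
  "Fn n = (\<Sum>j = 0..n div 2. qv ^ (j^2) * [:qbinom (n - j) (int j):] * xv ^ (n - 2 * j))"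

end

theory Submission
  imports Defs
begin

text \<open>
  Let \<open>P = ([i choose k]_q)\<close> be the lower unitriangular matrix of Gaussian binomials and \<open>T\<close> the
  tridiagonal matrix with \<open>x\<^sup>2\<close> on the diagonal, \<open>q\<^sup>k x\<^sup>2\<close> at \<open>(k, k - 1)\<close> and \<open>-1\<close> above the
  diagonal. The Pascal rule \<open>[i+1 choose j+1] = [i choose j] + q\<^sup>j\<^sup>+\<^sup>1 [i choose j+1]\<close> shows that
  the given matrix is \<open>P T\<close>, so its determinant is \<open>det T\<close>. Expanding \<open>det T\<close> along its last row
  gives \<open>D\<^sub>n\<^sub>+\<^sub>2 = x\<^sup>2 D\<^sub>n\<^sub>+\<^sub>1 + q\<^sup>n\<^sup>+\<^sup>1 x\<^sup>2 D\<^sub>n\<close>, and the other Pascal rule shows that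
  \<open>F\<^sub>n\<^sub>+\<^sub>2 = x F\<^sub>n\<^sub>+\<^sub>1 + q\<^sup>n\<^sup>+\<^sup>1 F\<^sub>n\<close>; hence \<open>D\<^sub>n = x\<^sup>n F\<^sub>n\<close>.
\<close>

section \<open>Gaussian binomial coefficients\<close>

fun gauss_binom :: "nat \<Rightarrow> nat \<Rightarrow> 'a :: comm_semiring_1 poly" where
  "gauss_binom _ 0 = 1"
| "gauss_binom 0 (Suc k) = 0"
| "gauss_binom (Suc m) (Suc k) = gauss_binom m k + monom 1 (Suc k) * gauss_binom m (Suc k)"

lemma gauss_binom_eq_0: "m < k \<Longrightarrow> gauss_binom m k = 0"
proof (induction m arbitrary: k)
  case 0
  then show ?case by (cases k) auto
next
  case (Suc m)
  then show ?case by (cases k) auto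
qed

lemma gauss_binom_self [simp]: "gauss_binom m m = 1"
  by (induction m) (auto simp: gauss_binom_eq_0)

definition q_pochhammer :: "nat \<Rightarrow> 'a :: comm_ring_1 poly" where
  "q_pochhammer m = (\<Prod>i<m. 1 - monom 1 (Suc i))"

lemma q_pochhammer_0 [simp]: "q_pochhammer 0 = 1"
  by (simp add: q_pochhammer_def)

lemma q_pochhammer_Suc: "q_pochhammer (Suc m) = q_pochhammer m * (1 - monom 1 (Suc m))"
  by (simp add: q_pochhammer_def)

lemma q_pochhammer_nonzero: "(q_pochhammer m :: 'a :: idom poly) \<noteq> 0"
proof -
  have "coeff (1 - monom (1::'a) (Suc i)) (Suc i) \<noteq> 0" for i
    by (simp add: coeff_monom)
  then have "1 - monom (1::'a) (Suc i) \<noteq> 0" for i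
    by (metis coeff_0)
  then show ?thesis
    by (simp add: q_pochhammer_def)
qed

lemma q_pochhammer_split:
  "k \<le> m \<Longrightarrow> q_pochhammer m = q_pochhammer (m - k) * (\<Prod>i<k. 1 - monom 1 (m - i))"
proof (induction k)
  case 0
  then show ?case by simp
next
  case (Suc k)
  then have "m - k = Suc (m - Suc k)" by simp
  with Suc show ?case by (simp add: q_pochhammer_Suc algebra_simps)
qed

lemma gauss_binom_mult_q_pochhammer:
  "k \<le> m \<Longrightarrow>
    gauss_binom m k * q_pochhammer k * q_pochhammer (m - k) = (q_pochhammer m :: 'a :: comm_ring_1 poly)"
proof (induction m arbitrary: k)
  case 0
  then show ?case by simp
next
  case (Suc m)
  show ?case
  proof (cases k)
    case 0
    then show ?thesis by simp
  next
    case (Suc j)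
    with Suc.prems have "j \<le> m" by simp
    have "gauss_binom m j * q_pochhammer (Suc j) * q_pochhammer (m - j)
        = (gauss_binom m j * q_pochhammer j * q_pochhammer (m - j) :: 'a poly) * (1 - monom 1 (Suc j))"
      by (simp add: q_pochhammer_Suc ac_simps)
    also have "\<dots> = q_pochhammer m * (1 - monom 1 (Suc j))"
      by (simp only: Suc.IH[OF \<open>j \<le> m\<close>])
    finally have left_summand: "gauss_binom m j * q_pochhammer (Suc j) * q_pochhammer (m - j)
        = (q_pochhammer m :: 'a poly) * (1 - monom 1 (Suc j))" .
    have right_summand: "monom 1 (Suc j) * gauss_binom m (Suc j) * q_pochhammer (Suc j) * q_pochhammer (m - j)
        = (q_pochhammer m :: 'a poly) * (monom 1 (Suc j) - monom 1 (Suc m))"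
    proof (cases "j = m")
      case True
      then show ?thesis by (simp add: gauss_binom_eq_0)
    next
      case False
      with \<open>j \<le> m\<close> have "Suc j \<le> m" by simp
      then have "m - j = Suc (m - Suc j)" and "monom (1::'a) (Suc j) * monom 1 (m - j) = monom 1 (Suc m)"
        by (simp_all add: mult_monom)
      then have "monom 1 (Suc j) * gauss_binom m (Suc j) * q_pochhammer (Suc j) * q_pochhammer (m - j)
          = monom 1 (Suc j) * (gauss_binom m (Suc j) * q_pochhammer (Suc j) * q_pochhammer (m - Suc j) :: 'a poly)
            * (1 - monom 1 (m - j))"
        by (simp add: q_pochhammer_Suc ac_simps)
      also have "\<dots> = monom 1 (Suc j) * q_pochhammer m * (1 - monom 1 (m - j))"
        by (simp only: Suc.IH[OF \<open>Suc j \<le> m\<close>])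
      finally show ?thesis
        using \<open>monom 1 (Suc j) * monom 1 (m - j) = monom 1 (Suc m)\<close> by (simp add: algebra_simps)
    qed
    have "gauss_binom (Suc m) k * q_pochhammer k * q_pochhammer (Suc m - k)
        = (gauss_binom m j :: 'a poly) * q_pochhammer (Suc j) * q_pochhammer (m - j)
          + monom 1 (Suc j) * gauss_binom m (Suc j) * q_pochhammer (Suc j) * q_pochhammer (m - j)"
      using Suc by (simp add: algebra_simps)
    also have "\<dots> = q_pochhammer (Suc m)"
      unfolding left_summand right_summand by (simp add: q_pochhammer_Suc algebra_simps)
    finally show ?thesis .
  qed
qed

lemma gauss_binom_Suc_Suc':
  "(gauss_binom (Suc m) (Suc k) :: 'a :: idom poly)
     = monom 1 (m - k) * gauss_binom m k + gauss_binom m (Suc k)"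
proof (cases "k \<le> m")
  case False
  then show ?thesis by (simp add: gauss_binom_eq_0)
next
  case True
  have "(monom 1 (m - k) * gauss_binom m k + gauss_binom m (Suc k)) * q_pochhammer (Suc k) * q_pochhammer (m - k)
      = (q_pochhammer (Suc m) :: 'a poly)"
  proof (cases "k = m")
    case True
    then show ?thesis by (simp add: gauss_binom_eq_0 q_pochhammer_Suc)
  next
    case False
    with \<open>k \<le> m\<close> have "Suc k \<le> m" by simp
    then have "m - k = Suc (m - Suc k)" by simp
    then have shift: "(q_pochhammer (m - k) :: 'a poly) = q_pochhammer (m - Suc k) * (1 - monom 1 (m - k))"
      by (simp only: q_pochhammer_Suc)
    have "(monom 1 (m - k) * gauss_binom m k + gauss_binom m (Suc k)) * q_pochhammer (Suc k) * q_pochhammer (m - k)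
        = monom 1 (m - k) * (gauss_binom m k * q_pochhammer k * q_pochhammer (m - k) :: 'a poly)
            * (1 - monom 1 (Suc k)) + gauss_binom m (Suc k) * q_pochhammer (Suc k) * q_pochhammer (m - k)"
      by (simp add: q_pochhammer_Suc[of k] ring_distribs mult_ac)
    also have "\<dots> = monom 1 (m - k) * q_pochhammer m * (1 - monom 1 (Suc k))
        + (gauss_binom m (Suc k) * q_pochhammer (Suc k) * q_pochhammer (m - Suc k)) * (1 - monom 1 (m - k))"
      by (subst gauss_binom_mult_q_pochhammer[OF \<open>k \<le> m\<close>]) (simp only: shift mult.assoc)
    also have "\<dots> = q_pochhammer m * (1 - monom 1 (m - k) * monom 1 (Suc k))"
      unfolding gauss_binom_mult_q_pochhammer[OF \<open>Suc k \<le> m\<close>] by (simp add: algebra_simps)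
    also have "\<dots> = q_pochhammer (Suc m)"
      using \<open>Suc k \<le> m\<close> by (simp add: mult_monom q_pochhammer_Suc)
    finally show ?thesis .
  qed
  moreover have "gauss_binom (Suc m) (Suc k) * q_pochhammer (Suc k) * q_pochhammer (m - k)
      = (q_pochhammer (Suc m) :: 'a poly)"
    using gauss_binom_mult_q_pochhammer[of "Suc k" "Suc m"] True by simp
  ultimately show ?thesis
    using q_pochhammer_nonzero by (metis mult_right_cancel)
qed

lemma qbinom_eq_gauss_binom: "qbinom m (int k) = gauss_binom m k"
proof (cases "k \<le> m")
  case True
  have "q_pochhammer (m - k) * (gauss_binom m k * q_pochhammer k) = (q_pochhammer m :: int poly)"
    using gauss_binom_mult_q_pochhammer[OF True] by (simp add: mult_ac)
  also have "\<dots> = q_pochhammer (m - k) * (\<Prod>i<k. 1 - monom 1 (m - i))"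
    by (rule q_pochhammer_split[OF True])
  finally have numerator: "(\<Prod>i<k. 1 - monom 1 (m - i)) = (gauss_binom m k * q_pochhammer k :: int poly)"
    by (simp add: q_pochhammer_nonzero)
  have "qbinom m (int k) = (\<Prod>i<k. 1 - monom 1 (m - i)) div q_pochhammer k"
    using True by (simp add: qbinom_def q_pochhammer_def)
  also have "\<dots> = gauss_binom m k"
    unfolding numerator by (simp add: q_pochhammer_nonzero)
  finally show ?thesis .
next
  case False
  then show ?thesis by (simp add: qbinom_def gauss_binom_eq_0)
qed

lemma qv_power: "qv ^ k = [:monom 1 k:]"
  by (simp add: qv_def poly_const_pow monom_altdef)

section \<open>The three-term recurrence of \<open>F\<^sub>n\<close>\<close>

definition Fn_term :: "nat \<Rightarrow> nat \<Rightarrow> int poly poly" where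
  "Fn_term n j = [:monom 1 (j\<^sup>2) * gauss_binom (n - j) j:] * xv ^ (n - 2 * j)"

lemma Fn_eq_sum_Fn_term: "Fn n = (\<Sum>j\<le>n. Fn_term n j)"
proof -
  have "Fn n = (\<Sum>j = 0..n div 2. Fn_term n j)"
    unfolding Fn_def Fn_term_def
    by (simp add: qbinom_eq_gauss_binom qv_power mult_to_poly mult_ac)
  also have "\<dots> = (\<Sum>j\<le>n. Fn_term n j)"
    by (rule sum.mono_neutral_left) (auto simp: Fn_term_def gauss_binom_eq_0)
  finally show ?thesis .
qed

lemma Fn_term_Suc_Suc:
  assumes "j \<le> n"
  shows "Fn_term (Suc (Suc n)) (Suc j) = xv * Fn_term (Suc n) (Suc j) + qv ^ Suc n * Fn_term n j"
proof (cases "2 * j \<le> n")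
  case False
  then show ?thesis by (simp add: Fn_term_def gauss_binom_eq_0)
next
  case True
  define c :: "int poly \<Rightarrow> int poly" where "c i = monom 1 ((Suc j)\<^sup>2) * i" for i
  have shifts: "Suc (Suc n) - Suc j = Suc (n - j)" "Suc n - Suc j = n - j"
    "Suc (Suc n) - 2 * Suc j = n - 2 * j"
    using assms by auto
  have x_term: "xv * Fn_term (Suc n) (Suc j) = [:c (gauss_binom (n - j) (Suc j)):] * xv ^ (n - 2 * j)"
  proof (cases "2 * j < n")
    case True
    then have "n - 2 * j = Suc (Suc n - 2 * Suc j)" by simp
    then show ?thesis unfolding Fn_term_def shifts c_def by (simp only: power_Suc ac_simps)
  next
    case False
    then show ?thesis unfolding Fn_term_def shifts by (simp add: gauss_binom_eq_0 c_def)
  qed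
  have "monom (1::int) (Suc n) * monom 1 (j\<^sup>2) = monom 1 ((Suc j)\<^sup>2) * monom 1 (n - j - j)"
    using True by (simp add: mult_monom power2_eq_square add.commute)
  then have q_term: "qv ^ Suc n * Fn_term n j
      = [:c (monom 1 (n - j - j) * gauss_binom (n - j) j):] * xv ^ (n - 2 * j)"
    unfolding Fn_term_def c_def by (simp only: qv_power mult_to_poly mult.assoc [symmetric])
  have "Fn_term (Suc (Suc n)) (Suc j)
      = [:c (monom 1 (n - j - j) * gauss_binom (n - j) j + gauss_binom (n - j) (Suc j)):] * xv ^ (n - 2 * j)"
    unfolding Fn_term_def shifts gauss_binom_Suc_Suc' c_def ..
  also have "\<dots> = qv ^ Suc n * Fn_term n j + xv * Fn_term (Suc n) (Suc j)"
    unfolding x_term q_term c_def by (simp add: distrib_left smult_add_left)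
  finally show ?thesis by simp
qed

lemma Fn_Suc_Suc: "Fn (Suc (Suc n)) = xv * Fn (Suc n) + qv ^ Suc n * Fn n"
proof -
  have "Fn (Suc (Suc n)) = Fn_term (Suc (Suc n)) 0 + (\<Sum>j\<le>Suc n. Fn_term (Suc (Suc n)) (Suc j))"
    unfolding Fn_eq_sum_Fn_term by (rule sum.atMost_Suc_shift)
  also have "(\<Sum>j\<le>Suc n. Fn_term (Suc (Suc n)) (Suc j)) = (\<Sum>j\<le>n. Fn_term (Suc (Suc n)) (Suc j))"
    by (simp add: Fn_term_def gauss_binom_eq_0)
  also have "\<dots> = (\<Sum>j\<le>n. xv * Fn_term (Suc n) (Suc j)) + (\<Sum>j\<le>n. qv ^ Suc n * Fn_term n j)"
    by (simp add: Fn_term_Suc_Suc sum.distrib)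
  also have "Fn_term (Suc (Suc n)) 0 = xv * Fn_term (Suc n) 0"
    by (simp add: Fn_term_def)
  finally show ?thesis
    unfolding Fn_eq_sum_Fn_term[of "Suc n"] Fn_eq_sum_Fn_term[of n] sum.atMost_Suc_shift
    by (simp add: sum_distrib_left distrib_left)
qed

section \<open>Determinants of tridiagonal matrices\<close>

lemma det_tridiagonal_Suc_Suc:
  fixes f :: "nat \<Rightarrow> nat \<Rightarrow> 'a :: comm_ring_1"
  assumes "\<And>i j. Suc i < j \<Longrightarrow> f i j = 0" and "\<And>i j. Suc j < i \<Longrightarrow> f i j = 0"
  shows "det (mat (Suc (Suc n)) (Suc (Suc n)) (\<lambda>(i, j). f i j))
    = f (Suc n) (Suc n) * det (mat (Suc n) (Suc n) (\<lambda>(i, j). f i j))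
      - f (Suc n) n * f n (Suc n) * det (mat n n (\<lambda>(i, j). f i j))"
proof -
  define A where "A = mat (Suc (Suc n)) (Suc (Suc n)) (\<lambda>(i, j). f i j)"
  define B where "B = mat_delete A (Suc n) n"
  have "det A = (\<Sum>j<Suc (Suc n). A $$ (Suc n, j) * cofactor A (Suc n) j)"
    by (rule laplace_expansion_row) (simp_all add: A_def)
  also have "\<dots> = A $$ (Suc n, n) * cofactor A (Suc n) n + A $$ (Suc n, Suc n) * cofactor A (Suc n) (Suc n)"
    by (simp add: A_def assms)
  finally have last_row: "det A = f (Suc n) n * cofactor A (Suc n) n
      + f (Suc n) (Suc n) * det (mat_delete A (Suc n) (Suc n))"
    by (simp add: A_def cofactor_def)
  have "mat_delete A (Suc n) (Suc n) = mat (Suc n) (Suc n) (\<lambda>(i, j). f i j)"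
    by (rule eq_matI) (auto simp: A_def mat_delete_def)
  moreover have "mat_delete B n n = mat n n (\<lambda>(i, j). f i j)"
    by (rule eq_matI) (auto simp: B_def A_def mat_delete_def)
  moreover have "det B = (\<Sum>i<Suc n. B $$ (i, n) * cofactor B i n)"
    by (rule laplace_expansion_column) (simp_all add: B_def A_def mat_delete_def)
  then have "det B = B $$ (n, n) * det (mat_delete B n n)"
    by (simp add: B_def A_def mat_delete_def assms cofactor_def)
  ultimately show ?thesis
    using last_row by (simp add: A_def B_def cofactor_def mat_delete_def algebra_simps)
qed

section \<open>Factorisation of the matrix\<close>

definition tridiag_factor :: "nat \<Rightarrow> nat \<Rightarrow> int poly poly" where
  "tridiag_factor k j = (if k = j then xv\<^sup>2 else 0) + (if k = Suc j then qv ^ k * xv\<^sup>2 else 0)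
     - (if Suc k = j then 1 else 0)"

lemma det_tridiag_factor: "det (mat n n (\<lambda>(i, j). tridiag_factor i j)) = xv ^ n * Fn n"
proof (induction n rule: induct_nat_012)
  case 0
  then show ?case by (simp add: Fn_def qbinom_eq_gauss_binom[of _ 0, simplified])
next
  case 1
  have "det (mat 1 1 (\<lambda>(i, j). tridiag_factor i j)) = tridiag_factor 0 0"
    by (subst det_single) auto
  then show ?case
    by (simp add: tridiag_factor_def Fn_def qbinom_eq_gauss_binom[of _ 0, simplified] power2_eq_square)
next
  case (ge2 n)
  have "det (mat (Suc (Suc n)) (Suc (Suc n)) (\<lambda>(i, j). tridiag_factor i j))
      = xv\<^sup>2 * (xv ^ Suc n * Fn (Suc n)) + qv ^ Suc n * xv\<^sup>2 * (xv ^ n * Fn n)"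
    by (subst det_tridiagonal_Suc_Suc) (auto simp: tridiag_factor_def ge2.IH)
  also have "\<dots> = xv ^ Suc (Suc n) * Fn (Suc (Suc n))"
    unfolding Fn_Suc_Suc by (simp add: algebra_simps power2_eq_square)
  finally show ?case .
qed

lemma det_gauss_binom_mat:
  "det (mat n n (\<lambda>(i, k). [:gauss_binom i k:])) = (1 :: 'a :: comm_ring_1 poly poly)"
proof -
  have "det (mat n n (\<lambda>(i, k). [:gauss_binom i k:]))
      = prod_list (diag_mat (mat n n (\<lambda>(i, k). [:gauss_binom i k:])))"
    by (rule det_lower_triangular[where n = n]) (simp_all add: gauss_binom_eq_0)
  also have "diag_mat (mat n n (\<lambda>(i, k). [:gauss_binom i k:])) = (replicate n 1 :: 'a poly poly list)"
    by (rule nth_equalityI) (simp_all add: diag_mat_def)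
  finally show ?thesis by simp
qed

lemma gauss_binom_row_times_tridiag_factor:
  assumes "i < n" "j < n"
  shows "(\<Sum>k<n. [:gauss_binom i k:] * tridiag_factor k j)
    = [:qbinom (i + 1) (int j + 1):] * xv\<^sup>2 - [:qbinom i (int j - 1):]"
proof -
  have diagonal: "(\<Sum>k<n. [:gauss_binom i k:] * (if k = j then xv\<^sup>2 else 0)) = [:gauss_binom i j:] * xv\<^sup>2"
    using assms by (simp add: if_distrib[of "\<lambda>x. _ * x"] cong: if_cong)
  have below: "(\<Sum>k<n. [:gauss_binom i k:] * (if k = Suc j then qv ^ k * xv\<^sup>2 else 0))
      = [:gauss_binom i (Suc j):] * qv ^ Suc j * xv\<^sup>2"
  proof (cases "Suc j < n")
    case True
    then show ?thesis by (simp add: if_distrib[of "\<lambda>x. _ * x"] mult.assoc cong: if_cong)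
  next
    case False
    with assms have "gauss_binom i (Suc j) = (0 :: int poly)" by (simp add: gauss_binom_eq_0)
    with False show ?thesis by (simp add: if_distrib[of "\<lambda>x. _ * x"] cong: if_cong)
  qed
  have above: "(\<Sum>k<n. [:gauss_binom i k:] * (if Suc k = j then 1 else 0)) = [:qbinom i (int j - 1):]"
  proof (cases j)
    case 0
    then show ?thesis by (simp add: qbinom_def)
  next
    case (Suc j')
    then have "(\<Sum>k<n. [:gauss_binom i k:] * (if Suc k = j then 1 else 0))
        = (\<Sum>k<n. if k = j' then [:gauss_binom i k:] else 0)"
      by (intro sum.cong) auto
    with assms Suc show ?thesis by (simp add: qbinom_eq_gauss_binom)
  qed
  have pascal: "[:gauss_binom i j:] + [:gauss_binom i (Suc j):] * qv ^ Suc j = [:qbinom (i + 1) (int j + 1):]"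
  proof -
    have "qbinom (i + 1) (int j + 1) = gauss_binom (Suc i) (Suc j)"
      using qbinom_eq_gauss_binom[of "Suc i" "Suc j"] by (simp add: add.commute)
    then show ?thesis
      by (simp only: qv_power mult_to_poly add_pCons add_0 gauss_binom.simps
          mult.commute[of "gauss_binom i (Suc j)"])
  qed
  have "(\<Sum>k<n. [:gauss_binom i k:] * tridiag_factor k j)
      = [:gauss_binom i j:] * xv\<^sup>2 + [:gauss_binom i (Suc j):] * qv ^ Suc j * xv\<^sup>2 - [:qbinom i (int j - 1):]"
    unfolding tridiag_factor_def diagonal [symmetric] below [symmetric] above [symmetric]
    by (simp add: sum.distrib sum_subtractf distrib_left right_diff_distrib)
  also have "\<dots> = [:qbinom (i + 1) (int j + 1):] * xv\<^sup>2 - [:qbinom i (int j - 1):]"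
    unfolding pascal [symmetric] by (simp add: algebra_simps)
  finally show ?thesis .
qed

lemma qbinom_mat_eq_mult:
  "mat n n (\<lambda>(i, j). [:qbinom (i + 1) (int j + 1):] * xv\<^sup>2 - [:qbinom i (int j - 1):])
    = mat n n (\<lambda>(i, k). [:gauss_binom i k:]) * mat n n (\<lambda>(i, j). tridiag_factor i j)"
  (is "?M = ?P * ?T")
proof (rule eq_matI)
  fix i j
  assume "i < dim_row (?P * ?T)" and "j < dim_col (?P * ?T)"
  then have "i < n" "j < n" by simp_all
  then have "(?P * ?T) $$ (i, j) = (\<Sum>k<n. [:gauss_binom i k:] * tridiag_factor k j)"
    by (simp add: scalar_prod_def atLeast0LessThan)
  with \<open>i < n\<close> \<open>j < n\<close> show "?M $$ (i, j) = (?P * ?T) $$ (i, j)"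
    by (simp only: gauss_binom_row_times_tridiag_factor index_mat split)
qed simp_all

theorem proposition8:
  fixes n :: nat
  assumes "n \<ge> 1"
  shows "det (mat n n (\<lambda>(i, j). [:qbinom (i + 1) (int j + 1):] * xv ^ 2 - [:qbinom i (int j - 1):]))
         = xv ^ n * Fn n"
proof -
  have "det (mat n n (\<lambda>(i, j). [:qbinom (i + 1) (int j + 1):] * xv ^ 2 - [:qbinom i (int j - 1):]))
      = det (mat n n (\<lambda>(i, k). [:gauss_binom i k:])) * det (mat n n (\<lambda>(i, j). tridiag_factor i j))"
    unfolding qbinom_mat_eq_mult by (rule det_mult[OF mat_carrier mat_carrier])
  then show ?thesis
    by (simp add: det_gauss_binom_mat det_tridiag_factor)
qed

end
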